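(* Let $(a_n)_{\mathrm c}\in\widetilde{\mathbb C}_{\mathrm c}$ and $c\in\widetilde{\mathbb C}$. (i) If $z\in S((a_n)_{\mathrm c},c)$ (i.e. $\sum_{n\in\widetilde{\mathbb N}}a_n(z-c)^n$ is a convergent hyperpower series), then there exists $K\in\widetilde{\mathbb N}$ such that $|a_n(z-c)^n|<K$ for all $n\in\widetilde{\mathbb N}$, where $a_n(z-c)^n$ denotes the $n$-th term of the formal hyperpower series $(a_n(z-c)^n)_n\in\widetilde{\mathbb C}_{\mathrm s}$. (ii) For all representatives $(a_n)_{\mathrm c}=[a_{n\varepsilon}]_{\mathrm c}$ and $c=[c_\varepsilon]$ there exists $\delta\in\widetilde{\mathbb R}_{>0}$ such that for every $z=[z_\varepsilon]\in B_\delta(c)$ there is $K=[K_\varepsilon]\in\widetilde{\mathbb R}_{>0}$ with: for all sufficiently small $\varepsilon$ and all $n\in\mathbb N$, $|a_{n\varepsilon}(z_\varepsilon-c_\varepsilon)^n|<K_\varepsilon$.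
   Context: Fix $I=(0,1]$ and a gauge $\rho=(\rho_\varepsilon)_{\varepsilon\in I}$ with $\rho_\varepsilon\in I$ and $\rho_\varepsilon\to0$ as $\varepsilon\to0$. "$\forall^0\varepsilon$" means "for all sufficiently small $\varepsilon\in I$". A net $(x_\varepsilon)\in\mathbb C^I$ is $\rho$-moderate ($(x_\varepsilon)\in\mathbb C_\rho$) if $\exists N\in\mathbb N\,\forall^0\varepsilon:|x_\varepsilon|\le\rho_\varepsilon^{-N}$, and $\rho$-negligible if $\forall q\in\mathbb N\,\forall^0\varepsilon:|x_\varepsilon|\le\rho_\varepsilon^q$. $\widetilde{\mathbb C}:=\mathbb C_\rho/\{\text{negligible nets}\}$ with classes $[x_\varepsilon]$; $\widetilde{\mathbb R}\subseteq\widetilde{\mathbb C}$ consists of classes of real moderate nets; $\mathrm d\rho:=[\rho_\varepsilon]$, $|[z_\varepsilon]|:=[|z_\varepsilon|]$. On $\widetilde{\mathbb R}$: $[x_\varepsilon]\le[y_\varepsilon]$ iff $x_\varepsilon\le y_\varepsilon+z_\varepsilon$ $\forall^0\varepsilon$ for some negligible $(z_\varepsilon)$; $x<y$ iff $\exists m\,\forall^0\varepsilon:y_\varepsilon-x_\varepsilon>\rho_\varepsilon^m$; $\widetilde{\mathbb R}_{>0}:=\{x:x>0\}$. $B_r(c):=\{z\in\widetilde{\mathbb C}:|z-c|<r\}$ for $r\in\widetilde{\mathbb R}_{>0}$. Hypernatural numbers: $\widetilde{\mathbb N}:=\{[n_\varepsilon]\in\widetilde{\mathbb R}:n_\varepsilon\in\mathbb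 N\ \forall\varepsilon\}$; for each $N\in\widetilde{\mathbb N}$ a representative $(\mathrm{ni}(N)_\varepsilon)$ with all $\mathrm{ni}(N)_\varepsilon\in\mathbb N$ is fixed. Hyperlimit: $l=\lim_{n\in\widetilde{\mathbb N}}a_n$ means $\forall q\,\exists M\in\widetilde{\mathbb N}\,\forall n\in\widetilde{\mathbb N}:n\ge M\Rightarrow|a_n-l|<\mathrm d\rho^q$. Hyperseries: a net $(a_{n\varepsilon})_{n\in\mathbb N,\varepsilon\in I}$ is moderate over hypersums if for every $N\in\widetilde{\mathbb N}$ the net $(\sum_{n=0}^{\mathrm{ni}(N)_\varepsilon}a_{n\varepsilon})_\varepsilon$ is $\rho$-moderate; two such nets are equivalent if for all $N,M\in\widetilde{\mathbb N}$ the net $(\sum_{n=\mathrm{ni}(N)_\varepsilon}^{\mathrm{ni}(M)_\varepsilon}(a_{n\varepsilon}-\bar a_{n\varepsilon}))_\varepsilon$ is negligible; the quotient is $\widetilde{\mathbb C}_{\mathrm s}$ with classes $(b_n)_n=[b_{n\varepsilon}]_{\mathrm s}$, and $b_N:=[b_{\mathrm{ni}(N)_\varepsilon,\varepsilon}]$ for $N\in\widetilde{\mathbb N}$ (well defined). $\sum_{n=N}^Mb_n:=[\sum_{n=\mathrm{ni}(N)_\varepsilon}^{\mathrm{ni}(M)_\varepsilon}b_{n\varepsilon}]$, and $\sum_{n\in\widetilde{\mathbb N}}b_n:=\lim_{N\in\widetilde{\mathbb N}}\sum_{n=0}^Nb_n$ when this hyperlimit exists. Coefficients: $\widetilde{\mathbb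 C}_{\mathrm c}$ is the set of weakly $\rho$-moderate nets $(a_{n\varepsilon})$ ($\exists Q,R\in\mathbb N\,\forall^0\varepsilon\,\forall n\in\mathbb N:|a_{n\varepsilon}|\le\rho_\varepsilon^{-nQ-R}$) modulo strong equivalence ($\forall q,r\,\forall^0\varepsilon\,\forall n:|a_{n\varepsilon}-\bar a_{n\varepsilon}|\le\rho_\varepsilon^{nq+r}$), classes $(a_n)_{\mathrm c}=[a_{n\varepsilon}]_{\mathrm c}$. $\widetilde{\mathbb R}_\infty:=(\mathbb R\cup\{\pm\infty\})^I/\sim_\rho$, and for $x\in\widetilde{\mathbb R}$, $y\in\widetilde{\mathbb R}_\infty$, $x<y$ iff $\exists m\,\forall^0\varepsilon:y_\varepsilon>x_\varepsilon+\rho_\varepsilon^m$. Radius: $\mathrm{rad}(a_n)_{\mathrm c}:=[(\limsup_n|a_{n\varepsilon}|^{1/n})^{-1}]\in\widetilde{\mathbb R}_\infty$. Set of convergence: $S((a_n)_{\mathrm c},c)$ is the set of $z\in\widetilde{\mathbb C}$ with $|z-c|<\mathrm{rad}(a_n)_{\mathrm c}$ for which there exist representatives $z=[z_\varepsilon]$, $c=[c_\varepsilon]$, $(a_n)_{\mathrm c}=[a_{n\varepsilon}]_{\mathrm c}$ such that: (a) the net $(a_{n\varepsilon}(z_\varepsilon-c_\varepsilon)^n)_{n,\varepsilon}$ is moderate over hypersums (its class $(a_n(z-c)^n)_n\in\widetilde{\mathbb C}_{\mathrm s}$ is the formal hyperpower series, independent of representatives); (b) the hyperseries $\sum_{n\in\widetilde{\mathbb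 N}}a_n(z-c)^n$ converges and equals $[\sum_{n=0}^{\infty}a_{n\varepsilon}(z_\varepsilon-c_\varepsilon)^n]$; (c) for every representative $z=[\hat z_\varepsilon]$, the net $(\sum_{n\ge1}na_{n\varepsilon}(\hat z_\varepsilon-c_\varepsilon)^{n-1})_\varepsilon$ is $\rho$-moderate. *)

theory Defs
  imports Complex_Main "HOL-Library.Extended_Real" "HOL-Library.Liminf_Limsup"
begin

text \<open>Generalized numbers are handled through their representatives (nets indexed by
  \<open>\<epsilon> \<in> (0,1]\<close>, encoded as functions on real); equality of classes is the
  explicit equivalence \<open>Ceq\<close>. "For all sufficiently small \<epsilon>" is
  \<open>eventually _ (at_right 0)\<close>.\<close>

definition rho_gauge :: "(real \<Rightarrow> real) \<Rightarrow> bool" where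
  "rho_gauge \<rho> \<longleftrightarrow> (\<forall>\<epsilon>\<in>{0<..1}. \<rho> \<epsilon> \<in> {0<..1}) \<and> (\<rho> \<longlongrightarrow> 0) (at_right 0)"

definition moderate :: "(real \<Rightarrow> real) \<Rightarrow> (real \<Rightarrow> 'a::real_normed_vector) \<Rightarrow> bool" where
  "moderate \<rho> x \<longleftrightarrow> (\<exists>N::nat. eventually (\<lambda>\<epsilon>. norm (x \<epsilon>) \<le> inverse (\<rho> \<epsilon>) ^ N) (at_right 0))"

definition negligible :: "(real \<Rightarrow> real) \<Rightarrow> (real \<Rightarrow> 'a::real_normed_vector) \<Rightarrow> bool" where
  "negligible \<rho> x \<longleftrightarrow> (\<forall>q::nat. eventually (\<lambda>\<epsilon>. norm (x \<epsilon>) \<le> \<rho> \<epsilon> ^ q) (at_right 0))"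

definition Ceq :: "(real \<Rightarrow> real) \<Rightarrow> (real \<Rightarrow> 'a::real_normed_vector) \<Rightarrow> (real \<Rightarrow> 'a) \<Rightarrow> bool" where
  "Ceq \<rho> x y \<longleftrightarrow> negligible \<rho> (\<lambda>\<epsilon>. x \<epsilon> - y \<epsilon>)"

definition gle :: "(real \<Rightarrow> real) \<Rightarrow> (real \<Rightarrow> real) \<Rightarrow> (real \<Rightarrow> real) \<Rightarrow> bool" where
  "gle \<rho> x y \<longleftrightarrow> (\<exists>z. negligible \<rho> z \<and> eventually (\<lambda>\<epsilon>. x \<epsilon> \<le> y \<epsilon> + z \<epsilon>) (at_right 0))"

definition glt :: "(real \<Rightarrow> real) \<Rightarrow> (real \<Rightarrow> real) \<Rightarrow> (real \<Rightarrow> real) \<Rightarrow> bool" where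
  "glt \<rho> x y \<longleftrightarrow> (\<exists>m::nat. eventually (\<lambda>\<epsilon>. y \<epsilon> - x \<epsilon> > \<rho> \<epsilon> ^ m) (at_right 0))"

definition glt_inf :: "(real \<Rightarrow> real) \<Rightarrow> (real \<Rightarrow> real) \<Rightarrow> (real \<Rightarrow> ereal) \<Rightarrow> bool" where
  "glt_inf \<rho> x y \<longleftrightarrow> (\<exists>m::nat. eventually (\<lambda>\<epsilon>. y \<epsilon> > ereal (x \<epsilon> + \<rho> \<epsilon> ^ m)) (at_right 0))"

definition hypnat :: "(real \<Rightarrow> real) \<Rightarrow> (real \<Rightarrow> nat) \<Rightarrow> bool" where
  "hypnat \<rho> n \<longleftrightarrow> moderate \<rho> (\<lambda>\<epsilon>. real (n \<epsilon>))"

definition hyperlim :: "(real \<Rightarrow> real) \<Rightarrow> ((real \<Rightarrow> nat) \<Rightarrow> real \<Rightarrow> complex) \<Rightarrow> (real \<Rightarrow> complex) \<Rightarrow> bool" where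
  "hyperlim \<rho> A l \<longleftrightarrow>
     (\<forall>q::nat. \<exists>M. hypnat \<rho> M \<and>
        (\<forall>n. hypnat \<rho> n \<and> gle \<rho> (\<lambda>\<epsilon>. real (M \<epsilon>)) (\<lambda>\<epsilon>. real (n \<epsilon>)) \<longrightarrow>
             glt \<rho> (\<lambda>\<epsilon>. norm (A n \<epsilon> - l \<epsilon>)) (\<lambda>\<epsilon>. \<rho> \<epsilon> ^ q)))"

definition hypsum_moderate :: "(real \<Rightarrow> real) \<Rightarrow> (nat \<Rightarrow> real \<Rightarrow> complex) \<Rightarrow> bool" where
  "hypsum_moderate \<rho> b \<longleftrightarrow> (\<forall>N. hypnat \<rho> N \<longrightarrow> moderate \<rho> (\<lambda>\<epsilon>. \<Sum>n\<le>N \<epsilon>. b n \<epsilon>))"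

definition coeff_wmod :: "(real \<Rightarrow> real) \<Rightarrow> (nat \<Rightarrow> real \<Rightarrow> complex) \<Rightarrow> bool" where
  "coeff_wmod \<rho> a \<longleftrightarrow> (\<exists>Q R::nat. eventually (\<lambda>\<epsilon>. \<forall>n. norm (a n \<epsilon>) \<le> inverse (\<rho> \<epsilon>) ^ (n * Q + R)) (at_right 0))"

definition coeff_eq :: "(real \<Rightarrow> real) \<Rightarrow> (nat \<Rightarrow> real \<Rightarrow> complex) \<Rightarrow> (nat \<Rightarrow> real \<Rightarrow> complex) \<Rightarrow> bool" where
  "coeff_eq \<rho> a a' \<longleftrightarrow> (\<forall>q r::nat. eventually (\<lambda>\<epsilon>. \<forall>n. norm (a n \<epsilon> - a' n \<epsilon>) \<le> \<rho> \<epsilon> ^ (n * q + r)) (at_right 0))"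

text \<open>Radius of convergence (a representative in \<open>\<widetilde>\<real>\<^sub>\<infinity>\<close>);
  in ereal, \<open>inverse 0 = \<infinity>\<close> and \<open>inverse \<infinity> = 0\<close>.\<close>
definition rad :: "(nat \<Rightarrow> real \<Rightarrow> complex) \<Rightarrow> real \<Rightarrow> ereal" where
  "rad a \<epsilon> = inverse (limsup (\<lambda>n. ereal (root n (norm (a n \<epsilon>)))))"

definition conv_set :: "(real \<Rightarrow> real) \<Rightarrow> (nat \<Rightarrow> real \<Rightarrow> complex) \<Rightarrow> (real \<Rightarrow> complex) \<Rightarrow> (real \<Rightarrow> complex) \<Rightarrow> bool" where
  "conv_set \<rho> a c z \<longleftrightarrow>
     moderate \<rho> z \<and>
     glt_inf \<rho> (\<lambda>\<epsilon>. norm (z \<epsilon> - c \<epsilon>)) (rad a) \<and>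
     (\<exists>z' c' a'. Ceq \<rho> z z' \<and> Ceq \<rho> c c' \<and> coeff_wmod \<rho> a' \<and> coeff_eq \<rho> a a' \<and>
        hypsum_moderate \<rho> (\<lambda>n \<epsilon>. a' n \<epsilon> * (z' \<epsilon> - c' \<epsilon>) ^ n) \<and>
        hyperlim \<rho> (\<lambda>N \<epsilon>. \<Sum>n\<le>N \<epsilon>. a' n \<epsilon> * (z' \<epsilon> - c' \<epsilon>) ^ n)
                   (\<lambda>\<epsilon>. \<Sum>n. a' n \<epsilon> * (z' \<epsilon> - c' \<epsilon>) ^ n) \<and>
        (\<forall>zh. Ceq \<rho> z zh \<longrightarrow>
           moderate \<rho> (\<lambda>\<epsilon>. \<Sum>n. of_nat (Suc n) * a' (Suc n) \<epsilon> * (zh \<epsilon> - c' \<epsilon>) ^ n)))"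

end

theory Submission
  imports Defs
begin

text \<open>Part (ii) is immediate from weak moderateness \<open>|a n| \<le> \<rho>^(-nQ-R)\<close>: on the ball of
  radius \<open>\<rho>^Q\<close> around \<open>c\<close> every term is at most \<open>\<rho>^(-R)\<close>.
  For part (i), each term is the difference of two consecutive partial sums, so beyond the
  hypernatural \<open>M\<close> from which the partial sums are within 1 of the limit the terms are
  below 2, while the terms up to \<open>M\<close> are dominated by the largest one, a difference of two
  moderate hypersums. Passing from the representatives in the definition of \<open>S\<close> to the given
  ones changes \<open>z - c\<close> negligibly; against a hypernatural exponent \<open>n\<close> such a change either
  is relatively smaller than \<open>1/(n+1)\<close>, costing a factor \<open>(1 + 1/(n+1))^n \<le> 3\<close>, or both
  bases are so small that weak moderateness bounds the term by \<open>\<rho>^(-R)\<close>.\<close>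

section \<open>Moderate and negligible nets\<close>

lemma gauge_eventually_less:
  assumes "rho_gauge \<rho>" "e > 0"
  shows "eventually (\<lambda>\<epsilon>. 0 < \<rho> \<epsilon> \<and> \<rho> \<epsilon> \<le> 1 \<and> \<rho> \<epsilon> < e) (at_right 0)"
proof -
  have range: "\<forall>\<epsilon>\<in>{0<..1}. \<rho> \<epsilon> \<in> {0<..1}" using assms(1) unfolding rho_gauge_def by auto
  have "eventually (\<lambda>\<epsilon>. \<epsilon> \<in> {0<..<1::real}) (at_right 0)"
    by (rule eventually_at_right_real) simp
  moreover have "eventually (\<lambda>\<epsilon>. \<rho> \<epsilon> < e) (at_right 0)"
    using assms unfolding rho_gauge_def by (auto dest: order_tendstoD(2))
  ultimately show ?thesis by eventually_elim (use range in auto)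
qed

lemma moderate_mono:
  assumes "moderate \<rho> g" "eventually (\<lambda>\<epsilon>. norm (f \<epsilon>) \<le> norm (g \<epsilon>)) (at_right 0)"
  shows "moderate \<rho> f"
proof -
  from assms(1) obtain N where "eventually (\<lambda>\<epsilon>. norm (g \<epsilon>) \<le> inverse (\<rho> \<epsilon>) ^ N) (at_right 0)"
    unfolding moderate_def by auto
  with assms(2) have "eventually (\<lambda>\<epsilon>. norm (f \<epsilon>) \<le> inverse (\<rho> \<epsilon>) ^ N) (at_right 0)"
    by eventually_elim auto
  then show ?thesis unfolding moderate_def by auto
qed

lemma negligible_mono:
  assumes "negligible \<rho> g" "eventually (\<lambda>\<epsilon>. norm (f \<epsilon>) \<le> norm (g \<epsilon>)) (at_right 0)"
  shows "negligible \<rho> f"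
  unfolding negligible_def
proof
  fix q
  from assms(1) have "eventually (\<lambda>\<epsilon>. norm (g \<epsilon>) \<le> \<rho> \<epsilon> ^ q) (at_right 0)"
    unfolding negligible_def by auto
  with assms(2) show "eventually (\<lambda>\<epsilon>. norm (f \<epsilon>) \<le> \<rho> \<epsilon> ^ q) (at_right 0)"
    by eventually_elim auto
qed

lemma moderate_norm: "moderate \<rho> f \<Longrightarrow> moderate \<rho> (\<lambda>\<epsilon>. norm (f \<epsilon>))"
  by (erule moderate_mono) simp

lemma negligible_norm: "negligible \<rho> f \<Longrightarrow> negligible \<rho> (\<lambda>\<epsilon>. norm (f \<epsilon>))"
  by (erule negligible_mono) simp

lemma moderate_add:
  assumes \<rho>: "rho_gauge \<rho>" and "moderate \<rho> f" "moderate \<rho> g"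
  shows "moderate \<rho> (\<lambda>\<epsilon>. f \<epsilon> + g \<epsilon>)"
proof -
  from assms obtain M N where
    f: "eventually (\<lambda>\<epsilon>. norm (f \<epsilon>) \<le> inverse (\<rho> \<epsilon>) ^ M) (at_right 0)" and
    g: "eventually (\<lambda>\<epsilon>. norm (g \<epsilon>) \<le> inverse (\<rho> \<epsilon>) ^ N) (at_right 0)"
    unfolding moderate_def by auto
  have small: "eventually (\<lambda>\<epsilon>. 0 < \<rho> \<epsilon> \<and> \<rho> \<epsilon> \<le> 1 \<and> \<rho> \<epsilon> < 1/2) (at_right 0)"
    by (rule gauge_eventually_less[OF \<rho>]) simp
  have "eventually (\<lambda>\<epsilon>. norm (f \<epsilon> + g \<epsilon>) \<le> inverse (\<rho> \<epsilon>) ^ Suc (M + N)) (at_right 0)"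
    using f g small
  proof eventually_elim
    case (elim \<epsilon>)
    let ?i = "inverse (\<rho> \<epsilon>)"
    have "1 \<le> ?i" "2 \<le> ?i" using elim by (simp_all add: field_simps)
    then have "?i ^ M \<le> ?i ^ (M + N)" "?i ^ N \<le> ?i ^ (M + N)"
      by (simp_all add: power_increasing)
    moreover have "2 * ?i ^ (M + N) \<le> ?i ^ Suc (M + N)"
      using elim unfolding power_Suc by (intro mult_right_mono) (auto simp: field_simps)
    moreover have "norm (f \<epsilon> + g \<epsilon>) \<le> norm (f \<epsilon>) + norm (g \<epsilon>)" by (rule norm_triangle_ineq)
    ultimately show ?case using elim by linarith
  qed
  then show ?thesis unfolding moderate_def by blast
qed

lemma negligible_add:
  assumes \<rho>: "rho_gauge \<rho>" and "negligible \<rho> f" "negligible \<rho> g"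
  shows "negligible \<rho> (\<lambda>\<epsilon>. f \<epsilon> + g \<epsilon>)"
  unfolding negligible_def
proof
  fix q
  have f: "eventually (\<lambda>\<epsilon>. norm (f \<epsilon>) \<le> \<rho> \<epsilon> ^ Suc q) (at_right 0)"
    using assms(2) unfolding negligible_def by blast
  have g: "eventually (\<lambda>\<epsilon>. norm (g \<epsilon>) \<le> \<rho> \<epsilon> ^ Suc q) (at_right 0)"
    using assms(3) unfolding negligible_def by blast
  have small: "eventually (\<lambda>\<epsilon>. 0 < \<rho> \<epsilon> \<and> \<rho> \<epsilon> \<le> 1 \<and> \<rho> \<epsilon> < 1/2) (at_right 0)"
    by (rule gauge_eventually_less[OF \<rho>]) simp
  show "eventually (\<lambda>\<epsilon>. norm (f \<epsilon> + g \<epsilon>) \<le> \<rho> \<epsilon> ^ q) (at_right 0)"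
    using f g small
  proof eventually_elim
    case (elim \<epsilon>)
    have "norm (f \<epsilon> + g \<epsilon>) \<le> 2 * \<rho> \<epsilon> * \<rho> \<epsilon> ^ q"
      using norm_triangle_ineq[of "f \<epsilon>" "g \<epsilon>"] elim by simp
    also have "\<dots> \<le> \<rho> \<epsilon> ^ q" using elim by (simp add: mult_left_le_one_le)
    finally show ?case .
  qed
qed

lemma moderate_uminus: "moderate \<rho> f \<Longrightarrow> moderate \<rho> (\<lambda>\<epsilon>. - f \<epsilon>)"
  by (erule moderate_mono) simp

lemma negligible_uminus: "negligible \<rho> f \<Longrightarrow> negligible \<rho> (\<lambda>\<epsilon>. - f \<epsilon>)"
  by (erule negligible_mono) simp

lemma moderate_diff:
  "rho_gauge \<rho> \<Longrightarrow> moderate \<rho> f \<Longrightarrow> moderate \<rho> g \<Longrightarrow> moderate \<rho> (\<lambda>\<epsilon>. f \<epsilon> - g \<epsilon>)"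
  using moderate_add[of \<rho> f "\<lambda>\<epsilon>. - g \<epsilon>"] moderate_uminus by fastforce

lemma negligible_diff:
  "rho_gauge \<rho> \<Longrightarrow> negligible \<rho> f \<Longrightarrow> negligible \<rho> g \<Longrightarrow> negligible \<rho> (\<lambda>\<epsilon>. f \<epsilon> - g \<epsilon>)"
  using negligible_add[of \<rho> f "\<lambda>\<epsilon>. - g \<epsilon>"] negligible_uminus by fastforce

lemma moderate_mult:
  fixes f g :: "real \<Rightarrow> 'a::real_normed_algebra"
  assumes "moderate \<rho> f" "moderate \<rho> g"
  shows "moderate \<rho> (\<lambda>\<epsilon>. f \<epsilon> * g \<epsilon>)"
proof -
  from assms obtain M N where
    f: "eventually (\<lambda>\<epsilon>. norm (f \<epsilon>) \<le> inverse (\<rho> \<epsilon>) ^ M) (at_right 0)" and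
    g: "eventually (\<lambda>\<epsilon>. norm (g \<epsilon>) \<le> inverse (\<rho> \<epsilon>) ^ N) (at_right 0)"
    unfolding moderate_def by auto
  have "eventually (\<lambda>\<epsilon>. norm (f \<epsilon> * g \<epsilon>) \<le> inverse (\<rho> \<epsilon>) ^ (M + N)) (at_right 0)"
    using f g
  proof eventually_elim
    case (elim \<epsilon>)
    have "norm (f \<epsilon> * g \<epsilon>) \<le> norm (f \<epsilon>) * norm (g \<epsilon>)" by (rule norm_mult_ineq)
    also have "\<dots> \<le> inverse (\<rho> \<epsilon>) ^ M * inverse (\<rho> \<epsilon>) ^ N"
      using elim by (intro mult_mono) (auto intro: order_trans[OF norm_ge_zero])
    finally show ?case by (simp add: power_add)
  qed
  then show ?thesis unfolding moderate_def by blast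
qed

lemma negligible_mult_moderate:
  fixes f g :: "real \<Rightarrow> 'a::real_normed_algebra"
  assumes "moderate \<rho> f" "negligible \<rho> g"
  shows "negligible \<rho> (\<lambda>\<epsilon>. f \<epsilon> * g \<epsilon>)"
  unfolding negligible_def
proof
  fix q
  from assms(1) obtain M where
    f: "eventually (\<lambda>\<epsilon>. norm (f \<epsilon>) \<le> inverse (\<rho> \<epsilon>) ^ M) (at_right 0)"
    unfolding moderate_def by auto
  from assms(2) have g: "eventually (\<lambda>\<epsilon>. norm (g \<epsilon>) \<le> \<rho> \<epsilon> ^ (M + q)) (at_right 0)"
    unfolding negligible_def by auto
  show "eventually (\<lambda>\<epsilon>. norm (f \<epsilon> * g \<epsilon>) \<le> \<rho> \<epsilon> ^ q) (at_right 0)"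
    using f g
  proof eventually_elim
    case (elim \<epsilon>)
    have "norm (f \<epsilon> * g \<epsilon>) \<le> norm (f \<epsilon>) * norm (g \<epsilon>)" by (rule norm_mult_ineq)
    also have "\<dots> \<le> inverse (\<rho> \<epsilon>) ^ M * \<rho> \<epsilon> ^ (M + q)"
      using elim by (intro mult_mono) (auto intro: order_trans[OF norm_ge_zero])
    also have "\<dots> = (inverse (\<rho> \<epsilon>) * \<rho> \<epsilon>) ^ M * \<rho> \<epsilon> ^ q"
      by (simp add: power_add power_mult_distrib)
    also have "\<dots> \<le> \<rho> \<epsilon> ^ q"
      by (cases "\<rho> \<epsilon> = 0"; cases M) simp_all
    finally show ?case .
  qed
qed

lemma moderate_const:
  assumes \<rho>: "rho_gauge \<rho>"
  shows "moderate \<rho> (\<lambda>_. C)"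
proof -
  have "eventually (\<lambda>\<epsilon>. 0 < \<rho> \<epsilon> \<and> \<rho> \<epsilon> \<le> 1 \<and> \<rho> \<epsilon> < inverse (norm C + 1)) (at_right 0)"
    by (rule gauge_eventually_less[OF \<rho>]) (simp add: add_nonneg_pos)
  then have "eventually (\<lambda>\<epsilon>. norm C \<le> inverse (\<rho> \<epsilon>) ^ 1) (at_right 0)"
  proof eventually_elim
    case (elim \<epsilon>)
    then have "inverse (inverse (norm C + 1)) < inverse (\<rho> \<epsilon>)"
      by (intro less_imp_inverse_less) auto
    then show ?case by simp
  qed
  then show ?thesis unfolding moderate_def by blast
qed

lemma moderate_inverse_gauge_power:
  assumes "rho_gauge \<rho>"
  shows "moderate \<rho> (\<lambda>\<epsilon>. inverse (\<rho> \<epsilon>) ^ k)"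
proof -
  have "eventually (\<lambda>\<epsilon>. norm (inverse (\<rho> \<epsilon>) ^ k) \<le> inverse (\<rho> \<epsilon>) ^ k) (at_right 0)"
    using gauge_eventually_less[OF assms zero_less_one] by eventually_elim (simp add: norm_power)
  then show ?thesis unfolding moderate_def by blast
qed

lemma hypnat_mono: "hypnat \<rho> N \<Longrightarrow> (\<And>\<epsilon>. N' \<epsilon> \<le> N \<epsilon>) \<Longrightarrow> hypnat \<rho> N'"
  unfolding hypnat_def by (erule moderate_mono) simp

lemma hypnat_add: "rho_gauge \<rho> \<Longrightarrow> hypnat \<rho> M \<Longrightarrow> hypnat \<rho> N \<Longrightarrow> hypnat \<rho> (\<lambda>\<epsilon>. M \<epsilon> + N \<epsilon>)"
  unfolding hypnat_def by (simp add: moderate_add)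

lemma hypnat_const: "rho_gauge \<rho> \<Longrightarrow> hypnat \<rho> (\<lambda>_. k)"
  unfolding hypnat_def by (rule moderate_const)

lemma gle_pointwise:
  assumes \<rho>: "rho_gauge \<rho>" and "\<And>\<epsilon>. x \<epsilon> \<le> y \<epsilon>"
  shows "gle \<rho> x y"
proof -
  have "negligible \<rho> (\<lambda>_. 0::real)"
    unfolding negligible_def
    using gauge_eventually_less[OF \<rho> zero_less_one] by (auto elim: eventually_mono)
  then show ?thesis unfolding gle_def using assms(2) by (intro exI[of _ "\<lambda>_. 0"]) auto
qed

lemma glt_imp_eventually_less:
  assumes \<rho>: "rho_gauge \<rho>" and "glt \<rho> x y"
  shows "eventually (\<lambda>\<epsilon>. x \<epsilon> < y \<epsilon>) (at_right 0)"
proof -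
  from assms(2) obtain m where "eventually (\<lambda>\<epsilon>. y \<epsilon> - x \<epsilon> > \<rho> \<epsilon> ^ m) (at_right 0)"
    unfolding glt_def by blast
  with gauge_eventually_less[OF \<rho> zero_less_one] show ?thesis
    by eventually_elim (metis diff_gt_0_iff_gt order.strict_trans zero_less_power)
qed

lemma glt_if_eventually_gap:
  "eventually (\<lambda>\<epsilon>. x \<epsilon> + 1 < y \<epsilon>) (at_right 0) \<Longrightarrow> glt \<rho> x y"
  unfolding glt_def by (intro exI[of _ 0]) (auto elim: eventually_mono)

lemma hypnat_above_moderate:
  fixes f :: "real \<Rightarrow> real"
  assumes \<rho>: "rho_gauge \<rho>" and f: "moderate \<rho> f"
  shows "\<exists>K. hypnat \<rho> K \<and>
           (\<forall>g. eventually (\<lambda>\<epsilon>. g \<epsilon> \<le> f \<epsilon>) (at_right 0) \<longrightarrow> glt \<rho> g (\<lambda>\<epsilon>. real (K \<epsilon>)))"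
proof (intro exI conjI allI impI)
  define K where "K = (\<lambda>\<epsilon>. nat \<lceil>f \<epsilon>\<rceil> + 2)"
  have K: "f \<epsilon> + 2 \<le> real (K \<epsilon>)" "real (K \<epsilon>) \<le> \<bar>f \<epsilon>\<bar> + 3" for \<epsilon>
    unfolding K_def by linarith+
  show "hypnat \<rho> K"
    unfolding hypnat_def
    by (rule moderate_mono[OF moderate_add[OF \<rho> moderate_norm[OF f] moderate_const[OF \<rho>, of 3]]])
      (use K(2) in \<open>auto intro: always_eventually\<close>)
  show "glt \<rho> g (\<lambda>\<epsilon>. real (K \<epsilon>))" if "eventually (\<lambda>\<epsilon>. g \<epsilon> \<le> f \<epsilon>) (at_right 0)" for g
    using that by (intro glt_if_eventually_gap, eventually_elim) (smt (verit) K(1))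
qed

lemma glt_zero_gauge_power:
  assumes \<rho>: "rho_gauge \<rho>"
  shows "glt \<rho> (\<lambda>_. 0) (\<lambda>\<epsilon>. \<rho> \<epsilon> ^ k)"
  unfolding glt_def
proof (intro exI[of _ "Suc k"])
  show "eventually (\<lambda>\<epsilon>. \<rho> \<epsilon> ^ k - 0 > \<rho> \<epsilon> ^ Suc k) (at_right 0)"
    using gauge_eventually_less[OF \<rho> zero_less_one] by eventually_elim simp
qed

section \<open>Estimates for single power terms\<close>

lemma norm_mult_power_le:
  fixes a x :: "'a::real_normed_div_algebra"
  assumes "norm a \<le> C * s ^ n" "norm x \<le> t" "0 \<le> C" "0 \<le> s" "s * t \<le> 1"
  shows "norm (a * x ^ n) \<le> C"
proof -
  have "norm (a * x ^ n) = norm a * norm x ^ n" by (simp add: norm_mult norm_power)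
  also have "\<dots> \<le> C * s ^ n * t ^ n"
    using assms by (intro mult_mono power_mono) auto
  also have "\<dots> = C * (s * t) ^ n" by (simp add: power_mult_distrib)
  also have "\<dots> \<le> C"
    using assms(3-5) order_trans[OF norm_ge_zero assms(2)]
    by (intro mult_left_le power_le_one) auto
  finally show ?thesis .
qed

lemma power_one_plus_inverse_Suc_le_3: "(1 + 1 / (real n + 1)) ^ n \<le> 3"
proof -
  have "(1 + 1 / (real n + 1)) ^ n \<le> exp (1 / (real n + 1)) ^ n"
    by (intro power_mono) (auto simp: add_pos_nonneg)
  also have "\<dots> = exp (real n / (real n + 1))" by (simp add: exp_of_nat_mult[symmetric])
  also have "\<dots> \<le> exp 1" by simp
  also have "\<dots> \<le> 3" by (rule exp_le)
  finally show ?thesis .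
qed

lemma norm_power_le_if_close:
  fixes x y :: "'a::real_normed_div_algebra"
  assumes "(real n + 1) * norm (x - y) \<le> norm y"
  shows "norm x ^ n \<le> 3 * norm y ^ n"
proof -
  have "norm x \<le> norm y + norm (x - y)" by (metis norm_triangle_sub add.commute)
  also have "\<dots> \<le> norm y * (1 + 1 / (real n + 1))"
    using assms by (simp add: field_simps)
  finally have "norm x ^ n \<le> norm y ^ n * (1 + 1 / (real n + 1)) ^ n"
    by (metis power_mono power_mult_distrib norm_ge_zero)
  also have "\<dots> \<le> norm y ^ n * 3"
    by (intro mult_left_mono power_one_plus_inverse_Suc_le_3) auto
  finally show ?thesis by simp
qed

lemma norm_coeff_power_transfer:
  fixes a a' x y :: "'a::real_normed_field"
  assumes r: "0 < r"
    and a: "norm (a - a') \<le> r ^ (n * P)" and x: "norm x \<le> inverse r ^ P"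
    and a': "norm a' \<le> inverse r ^ (n * Q + R)" and xy: "(real n + 2) * norm (x - y) \<le> r ^ Q"
  shows "norm (a * x ^ n) \<le> 1 + 3 * norm (a' * y ^ n) + inverse r ^ R"
proof -
  have a'_pow: "norm a' \<le> inverse r ^ R * (inverse r ^ Q) ^ n"
    using a' by (simp add: power_add power_mult mult.commute)
  have a_pow: "norm (a - a') \<le> 1 * (r ^ P) ^ n"
    using a by (simp add: power_mult[symmetric] mult.commute)
  have "norm ((a - a') * x ^ n) \<le> 1"
    using r by (intro norm_mult_power_le[OF a_pow x]) (auto simp: power_mult_distrib[symmetric])
  moreover have "norm (a' * x ^ n) \<le> 3 * norm (a' * y ^ n) + inverse r ^ R"
  proof (cases "(real n + 1) * norm (x - y) \<le> norm y")
    case True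
    then have "norm (a' * x ^ n) \<le> 3 * norm (a' * y ^ n)"
      by (simp add: norm_mult norm_power mult.left_commute mult_left_mono norm_power_le_if_close)
    then show ?thesis using r by (intro add_increasing2) auto
  next
    case False
    have "norm x \<le> norm y + norm (x - y)" by (metis norm_triangle_sub add.commute)
    also have "\<dots> \<le> r ^ Q" using False xy by (simp add: algebra_simps)
    finally have "norm (a' * x ^ n) \<le> inverse r ^ R"
      using a'_pow r by (intro norm_mult_power_le) (auto simp: power_mult_distrib[symmetric])
    then show ?thesis by (intro add_increasing) auto
  qed
  moreover have "norm (a * x ^ n) \<le> norm ((a - a') * x ^ n) + norm (a' * x ^ n)"
    by (metis norm_triangle_ineq diff_add_cancel distrib_right)
  ultimately show ?thesis by linarith
qed

lemma coeff_power_transfer_eventually: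
  fixes a a' :: "nat \<Rightarrow> real \<Rightarrow> complex" and c c' z z' :: "real \<Rightarrow> complex"
  assumes \<rho>: "rho_gauge \<rho>" and zc: "moderate \<rho> (\<lambda>\<epsilon>. z \<epsilon> - c \<epsilon>)"
    and z: "Ceq \<rho> z z'" and c: "Ceq \<rho> c c'" and a: "coeff_eq \<rho> a a'"
    and a': "eventually (\<lambda>\<epsilon>. \<forall>n. norm (a' n \<epsilon>) \<le> inverse (\<rho> \<epsilon>) ^ (n * Q + R)) (at_right 0)"
    and N: "hypnat \<rho> N"
  shows "eventually (\<lambda>\<epsilon>. norm (a (N \<epsilon>) \<epsilon> * (z \<epsilon> - c \<epsilon>) ^ N \<epsilon>)
           \<le> 1 + 3 * norm (a' (N \<epsilon>) \<epsilon> * (z' \<epsilon> - c' \<epsilon>) ^ N \<epsilon>) + inverse (\<rho> \<epsilon>) ^ R) (at_right 0)"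
proof -
  from zc obtain P where P: "eventually (\<lambda>\<epsilon>. norm (z \<epsilon> - c \<epsilon>) \<le> inverse (\<rho> \<epsilon>) ^ P) (at_right 0)"
    unfolding moderate_def by auto
  from a have aa': "eventually (\<lambda>\<epsilon>. \<forall>n. norm (a n \<epsilon> - a' n \<epsilon>) \<le> \<rho> \<epsilon> ^ (n * P + 0)) (at_right 0)"
    unfolding coeff_eq_def by blast
  have "negligible \<rho> (\<lambda>\<epsilon>. (z \<epsilon> - z' \<epsilon>) - (c \<epsilon> - c' \<epsilon>))"
    using z c unfolding Ceq_def by (rule negligible_diff[OF \<rho>])
  then have "negligible \<rho> (\<lambda>\<epsilon>. (real (N \<epsilon>) + 2) * norm ((z \<epsilon> - c \<epsilon>) - (z' \<epsilon> - c' \<epsilon>)))"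
    using N unfolding hypnat_def
    by (intro negligible_mult_moderate moderate_add[OF \<rho>] moderate_const[OF \<rho>] negligible_norm)
      (simp_all add: algebra_simps)
  then have close: "eventually (\<lambda>\<epsilon>. (real (N \<epsilon>) + 2) * norm ((z \<epsilon> - c \<epsilon>) - (z' \<epsilon> - c' \<epsilon>)) \<le> \<rho> \<epsilon> ^ Q)
      (at_right 0)"
    unfolding negligible_def by (auto elim: eventually_mono)
  show ?thesis
    using gauge_eventually_less[OF \<rho> zero_less_one] P aa' a' close
    by eventually_elim (intro norm_coeff_power_transfer; simp)
qed

section \<open>Terms of hyperpower series\<close>

lemma norm_term_le_partial_sums:
  fixes T :: "nat \<Rightarrow> 'a::real_normed_vector"
  assumes "0 < j"
  shows "norm (T j) \<le> norm ((\<Sum>n\<le>j. T n) - l) + norm ((\<Sum>n\<le>j - 1. T n) - l)"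
proof -
  obtain k where k: "j = Suc k" using assms by (cases j) auto
  have "T j = ((\<Sum>n\<le>j. T n) - l) - ((\<Sum>n\<le>j - 1. T n) - l)" using k by simp
  then show ?thesis by (metis norm_triangle_ineq4)
qed

lemma hypsum_moderate_initial_terms_bounded:
  fixes T :: "nat \<Rightarrow> real \<Rightarrow> complex"
  assumes \<rho>: "rho_gauge \<rho>" and T: "hypsum_moderate \<rho> T" and M: "hypnat \<rho> M"
  shows "\<exists>B. moderate \<rho> B \<and> (\<forall>\<epsilon>. \<forall>n\<le>M \<epsilon>. norm (T n \<epsilon>) \<le> B \<epsilon>)"
proof -
  have "\<forall>\<epsilon>. \<exists>j\<le>M \<epsilon>. \<forall>n\<le>M \<epsilon>. norm (T n \<epsilon>) \<le> norm (T j \<epsilon>)"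
  proof
    fix \<epsilon>
    let ?B = "Max ((\<lambda>n. norm (T n \<epsilon>)) ` {..M \<epsilon>})"
    have "?B \<in> (\<lambda>n. norm (T n \<epsilon>)) ` {..M \<epsilon>}" by (intro Max_in) auto
    then obtain j where "j \<le> M \<epsilon>" "?B = norm (T j \<epsilon>)" by blast
    moreover have "\<forall>n\<le>M \<epsilon>. norm (T n \<epsilon>) \<le> ?B" by (auto intro: Max_ge)
    ultimately show "\<exists>j\<le>M \<epsilon>. \<forall>n\<le>M \<epsilon>. norm (T n \<epsilon>) \<le> norm (T j \<epsilon>)" by auto
  qed
  \<comment> \<open>The largest term sits at a hypernatural index, so it is a difference of two hypersums.\<close>
  then obtain J where J: "\<And>\<epsilon>. J \<epsilon> \<le> M \<epsilon>" "\<And>\<epsilon> n. n \<le> M \<epsilon> \<Longrightarrow> norm (T n \<epsilon>) \<le> norm (T (J \<epsilon>) \<epsilon>)"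
    by metis
  have J_hyp: "hypnat \<rho> J" by (rule hypnat_mono[OF M J(1)])
  moreover have "hypnat \<rho> (\<lambda>\<epsilon>. J \<epsilon> - 1)" by (rule hypnat_mono[OF J_hyp]) simp
  ultimately have "moderate \<rho> (\<lambda>\<epsilon>. norm (\<Sum>n\<le>J \<epsilon>. T n \<epsilon>) + norm (\<Sum>n\<le>J \<epsilon> - 1. T n \<epsilon>))"
    using T unfolding hypsum_moderate_def by (intro moderate_add[OF \<rho>] moderate_norm) auto
  moreover have "norm (T (J \<epsilon>) \<epsilon>) \<le> norm (\<Sum>n\<le>J \<epsilon>. T n \<epsilon>) + norm (\<Sum>n\<le>J \<epsilon> - 1. T n \<epsilon>)" for \<epsilon>
    using norm_term_le_partial_sums[of "J \<epsilon>" "\<lambda>n. T n \<epsilon>" 0] by (cases "J \<epsilon> = 0") simp_all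
  ultimately have "moderate \<rho> (\<lambda>\<epsilon>. norm (T (J \<epsilon>) \<epsilon>))"
    by (elim moderate_mono) (simp add: always_eventually)
  with J(2) show ?thesis by blast
qed

lemma hyperlim_tail_terms_lt_2:
  fixes T :: "nat \<Rightarrow> real \<Rightarrow> complex"
  assumes \<rho>: "rho_gauge \<rho>" and lim: "hyperlim \<rho> (\<lambda>N \<epsilon>. \<Sum>n\<le>N \<epsilon>. T n \<epsilon>) L"
  shows "\<exists>M. hypnat \<rho> M \<and>
           (\<forall>N. hypnat \<rho> N \<longrightarrow> eventually (\<lambda>\<epsilon>. M \<epsilon> < N \<epsilon> \<longrightarrow> norm (T (N \<epsilon>) \<epsilon>) < 2) (at_right 0))"
proof -
  from lim obtain M where M: "hypnat \<rho> M" and tail: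
    "\<And>N. hypnat \<rho> N \<Longrightarrow> gle \<rho> (\<lambda>\<epsilon>. real (M \<epsilon>)) (\<lambda>\<epsilon>. real (N \<epsilon>)) \<Longrightarrow>
       glt \<rho> (\<lambda>\<epsilon>. norm ((\<Sum>n\<le>N \<epsilon>. T n \<epsilon>) - L \<epsilon>)) (\<lambda>\<epsilon>. \<rho> \<epsilon> ^ 0)"
    unfolding hyperlim_def by blast
  have tail_lt_1: "eventually (\<lambda>\<epsilon>. norm ((\<Sum>n\<le>N \<epsilon>. T n \<epsilon>) - L \<epsilon>) < 1) (at_right 0)"
    if "hypnat \<rho> N" "\<And>\<epsilon>. M \<epsilon> \<le> N \<epsilon>" for N
    using glt_imp_eventually_less[OF \<rho> tail[OF that(1) gle_pointwise[OF \<rho>]]] that(2) by simp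
  have "eventually (\<lambda>\<epsilon>. M \<epsilon> < N \<epsilon> \<longrightarrow> norm (T (N \<epsilon>) \<epsilon>) < 2) (at_right 0)" if N: "hypnat \<rho> N" for N
  proof -
    \<comment> \<open>\<open>N'\<close> and \<open>N' - 1\<close> lie past \<open>M\<close> at every \<open>\<epsilon>\<close>, so the hyperlimit applies to both.\<close>
    define N' where "N' = (\<lambda>\<epsilon>. max (N \<epsilon>) (Suc (M \<epsilon>)))"
    have N': "hypnat \<rho> N'"
      using hypnat_add[OF \<rho> N hypnat_add[OF \<rho> M hypnat_const[OF \<rho>, of 1]]]
      by (rule hypnat_mono) (auto simp: N'_def)
    have N'_pred: "hypnat \<rho> (\<lambda>\<epsilon>. N' \<epsilon> - 1)" using N' by (rule hypnat_mono) simp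
    have past_M: "M \<epsilon> \<le> N' \<epsilon>" "M \<epsilon> \<le> N' \<epsilon> - 1" for \<epsilon> by (auto simp: N'_def)
    show ?thesis
      using tail_lt_1[OF N' past_M(1)] tail_lt_1[OF N'_pred past_M(2)]
    proof eventually_elim
      case (elim \<epsilon>)
      show ?case
      proof
        assume "M \<epsilon> < N \<epsilon>"
        then have "N' \<epsilon> = N \<epsilon>" "0 < N' \<epsilon>" by (auto simp: N'_def)
        then show "norm (T (N \<epsilon>) \<epsilon>) < 2"
          using norm_term_le_partial_sums[of "N' \<epsilon>" "\<lambda>n. T n \<epsilon>" "L \<epsilon>"] elim by simp
      qed
    qed
  qed
  with M show ?thesis by blast
qed

lemma hyperseries_terms_bounded:
  fixes T :: "nat \<Rightarrow> real \<Rightarrow> complex"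
  assumes \<rho>: "rho_gauge \<rho>" and T: "hypsum_moderate \<rho> T"
    and lim: "hyperlim \<rho> (\<lambda>N \<epsilon>. \<Sum>n\<le>N \<epsilon>. T n \<epsilon>) L"
  shows "\<exists>B. moderate \<rho> B \<and>
           (\<forall>N. hypnat \<rho> N \<longrightarrow> eventually (\<lambda>\<epsilon>. norm (T (N \<epsilon>) \<epsilon>) \<le> B \<epsilon>) (at_right 0))"
proof -
  obtain M where M: "hypnat \<rho> M" and tail:
    "\<And>N. hypnat \<rho> N \<Longrightarrow> eventually (\<lambda>\<epsilon>. M \<epsilon> < N \<epsilon> \<longrightarrow> norm (T (N \<epsilon>) \<epsilon>) < 2) (at_right 0)"
    using hyperlim_tail_terms_lt_2[OF \<rho> lim] by blast
  obtain B where B: "moderate \<rho> B" and head: "\<And>\<epsilon> n. n \<le> M \<epsilon> \<Longrightarrow> norm (T n \<epsilon>) \<le> B \<epsilon>"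
    using hypsum_moderate_initial_terms_bounded[OF \<rho> T M] by blast
  have B_nonneg: "0 \<le> B \<epsilon>" for \<epsilon> by (rule order_trans[OF norm_ge_zero head[of "M \<epsilon>"]]) simp
  have "eventually (\<lambda>\<epsilon>. norm (T (N \<epsilon>) \<epsilon>) \<le> B \<epsilon> + 2) (at_right 0)" if "hypnat \<rho> N" for N
    using tail[OF that]
  proof eventually_elim
    case (elim \<epsilon>)
    show ?case using B_nonneg[of \<epsilon>] head[of "N \<epsilon>" \<epsilon>] elim by (cases "N \<epsilon> \<le> M \<epsilon>") auto
  qed
  moreover have "moderate \<rho> (\<lambda>\<epsilon>. B \<epsilon> + 2)" by (intro moderate_add[OF \<rho> B] moderate_const[OF \<rho>])
  ultimately show ?thesis by blast
qed

lemma conv_set_terms_bounded: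
  fixes a :: "nat \<Rightarrow> real \<Rightarrow> complex" and c z :: "real \<Rightarrow> complex"
  assumes \<rho>: "rho_gauge \<rho>" and c: "moderate \<rho> c" and z: "conv_set \<rho> a c z"
  shows "\<exists>K. hypnat \<rho> K \<and>
           (\<forall>N. hypnat \<rho> N \<longrightarrow>
              glt \<rho> (\<lambda>\<epsilon>. norm (a (N \<epsilon>) \<epsilon> * (z \<epsilon> - c \<epsilon>) ^ (N \<epsilon>))) (\<lambda>\<epsilon>. real (K \<epsilon>)))"
proof -
  from z obtain z' c' a' where "moderate \<rho> z" and
    zz': "Ceq \<rho> z z'" and cc': "Ceq \<rho> c c'" and "coeff_wmod \<rho> a'" and aa': "coeff_eq \<rho> a a'" and
    sums_moderate: "hypsum_moderate \<rho> (\<lambda>n \<epsilon>. a' n \<epsilon> * (z' \<epsilon> - c' \<epsilon>) ^ n)" and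
    sums_lim: "hyperlim \<rho> (\<lambda>N \<epsilon>. \<Sum>n\<le>N \<epsilon>. a' n \<epsilon> * (z' \<epsilon> - c' \<epsilon>) ^ n)
       (\<lambda>\<epsilon>. \<Sum>n. a' n \<epsilon> * (z' \<epsilon> - c' \<epsilon>) ^ n)"
    unfolding conv_set_def by blast
  obtain B where B: "moderate \<rho> B" and terms: "\<And>N. hypnat \<rho> N \<Longrightarrow>
      eventually (\<lambda>\<epsilon>. norm (a' (N \<epsilon>) \<epsilon> * (z' \<epsilon> - c' \<epsilon>) ^ N \<epsilon>) \<le> B \<epsilon>) (at_right 0)"
    using hyperseries_terms_bounded[OF \<rho> sums_moderate sums_lim] by blast
  have zc: "moderate \<rho> (\<lambda>\<epsilon>. z \<epsilon> - c \<epsilon>)" by (intro moderate_diff[OF \<rho> \<open>moderate \<rho> z\<close> c])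
  from \<open>coeff_wmod \<rho> a'\<close> obtain Q R
    where QR: "eventually (\<lambda>\<epsilon>. \<forall>n. norm (a' n \<epsilon>) \<le> inverse (\<rho> \<epsilon>) ^ (n * Q + R)) (at_right 0)"
    unfolding coeff_wmod_def by auto
  have "moderate \<rho> (\<lambda>\<epsilon>. 1 + 3 * B \<epsilon> + inverse (\<rho> \<epsilon>) ^ R)"
    by (intro moderate_add[OF \<rho>] moderate_mult moderate_const[OF \<rho>]
        moderate_inverse_gauge_power[OF \<rho>] B)
  then obtain K where "hypnat \<rho> K" and K: "\<And>g. eventually (\<lambda>\<epsilon>. g \<epsilon> \<le> 1 + 3 * B \<epsilon> + inverse (\<rho> \<epsilon>) ^ R)
      (at_right 0) \<Longrightarrow> glt \<rho> g (\<lambda>\<epsilon>. real (K \<epsilon>))"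
    using hypnat_above_moderate[OF \<rho>] by blast
  have bound: "eventually (\<lambda>\<epsilon>. norm (a (N \<epsilon>) \<epsilon> * (z \<epsilon> - c \<epsilon>) ^ (N \<epsilon>))
      \<le> 1 + 3 * B \<epsilon> + inverse (\<rho> \<epsilon>) ^ R) (at_right 0)" if N: "hypnat \<rho> N" for N
    using coeff_power_transfer_eventually[OF \<rho> zc zz' cc' aa' QR N] terms[OF N]
    by eventually_elim linarith
  show ?thesis
    by (intro exI[of _ K] conjI allI impI \<open>hypnat \<rho> K\<close> K bound)
qed

lemma coeff_wmod_terms_bounded_near_center:
  fixes a :: "nat \<Rightarrow> real \<Rightarrow> complex" and c :: "real \<Rightarrow> complex"
  assumes \<rho>: "rho_gauge \<rho>" and a: "coeff_wmod \<rho> a"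
  shows "\<exists>\<delta>. moderate \<rho> \<delta> \<and> glt \<rho> (\<lambda>_. 0) \<delta> \<and>
           (\<forall>z. glt \<rho> (\<lambda>\<epsilon>. norm (z \<epsilon> - c \<epsilon>)) \<delta> \<longrightarrow>
              (\<exists>K. moderate \<rho> K \<and> glt \<rho> (\<lambda>_. 0) K \<and>
                 eventually (\<lambda>\<epsilon>. \<forall>n. norm (a n \<epsilon> * (z \<epsilon> - c \<epsilon>) ^ n) < K \<epsilon>) (at_right 0)))"
proof -
  from a obtain Q R
    where QR: "eventually (\<lambda>\<epsilon>. \<forall>n. norm (a n \<epsilon>) \<le> inverse (\<rho> \<epsilon>) ^ (n * Q + R)) (at_right 0)"
    unfolding coeff_wmod_def by auto
  have \<rho>_unit: "eventually (\<lambda>\<epsilon>. 0 < \<rho> \<epsilon> \<and> \<rho> \<epsilon> \<le> 1 \<and> \<rho> \<epsilon> < 1) (at_right 0)"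
    by (rule gauge_eventually_less[OF \<rho> zero_less_one])
  define \<delta> where "\<delta> = (\<lambda>\<epsilon>. \<rho> \<epsilon> ^ Q)"
  define K where "K = (\<lambda>\<epsilon>. inverse (\<rho> \<epsilon>) ^ R + 1)"
  have "moderate \<rho> \<delta>"
    using moderate_const[OF \<rho>, of "1::real"] unfolding \<delta>_def
    by (rule moderate_mono) (use \<rho>_unit in \<open>auto elim: eventually_mono simp: power_le_one\<close>)
  moreover have "moderate \<rho> K" "glt \<rho> (\<lambda>_. 0) K"
    unfolding K_def using \<rho>_unit
    by (auto intro!: moderate_add[OF \<rho>] moderate_inverse_gauge_power[OF \<rho>] moderate_const[OF \<rho>]
        glt_if_eventually_gap elim: eventually_mono)
  moreover have "eventually (\<lambda>\<epsilon>. \<forall>n. norm (a n \<epsilon> * (z \<epsilon> - c \<epsilon>) ^ n) < K \<epsilon>) (at_right 0)"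
    if "glt \<rho> (\<lambda>\<epsilon>. norm (z \<epsilon> - c \<epsilon>)) \<delta>" for z
    using glt_imp_eventually_less[OF \<rho> that] \<rho>_unit QR
  proof eventually_elim
    case (elim \<epsilon>)
    have "norm (a n \<epsilon>) \<le> inverse (\<rho> \<epsilon>) ^ R * (inverse (\<rho> \<epsilon>) ^ Q) ^ n" for n
      using spec[OF elim(3), of n] by (simp add: power_add power_mult mult.commute[of n Q] mult.commute[of "inverse (\<rho> \<epsilon>) ^ R"])
    then have "norm (a n \<epsilon> * (z \<epsilon> - c \<epsilon>) ^ n) \<le> inverse (\<rho> \<epsilon>) ^ R" for n
      using elim by (intro norm_mult_power_le[where t = "\<rho> \<epsilon> ^ Q"])
        (auto simp: \<delta>_def power_mult_distrib[symmetric])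
    then show ?case unfolding K_def by (meson less_add_one order_le_less_trans)
  qed
  ultimately show ?thesis using glt_zero_gauge_power[OF \<rho>] unfolding \<delta>_def by blast
qed

theorem lemma2p32:
  fixes \<rho> :: "real \<Rightarrow> real" and a :: "nat \<Rightarrow> real \<Rightarrow> complex" and c :: "real \<Rightarrow> complex"
  assumes "rho_gauge \<rho>" and "coeff_wmod \<rho> a" and "moderate \<rho> c"
  shows "(\<forall>z. conv_set \<rho> a c z \<longrightarrow>
            (\<exists>K. hypnat \<rho> K \<and>
               (\<forall>N. hypnat \<rho> N \<longrightarrow>
                  glt \<rho> (\<lambda>\<epsilon>. norm (a (N \<epsilon>) \<epsilon> * (z \<epsilon> - c \<epsilon>) ^ (N \<epsilon>))) (\<lambda>\<epsilon>. real (K \<epsilon>)))))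
       \<and> (\<exists>\<delta>. moderate \<rho> \<delta> \<and> glt \<rho> (\<lambda>_. 0) \<delta> \<and>
            (\<forall>z. moderate \<rho> z \<and> glt \<rho> (\<lambda>\<epsilon>. norm (z \<epsilon> - c \<epsilon>)) \<delta> \<longrightarrow>
               (\<exists>K. moderate \<rho> K \<and> glt \<rho> (\<lambda>_. 0) K \<and>
                  eventually (\<lambda>\<epsilon>. \<forall>n. norm (a n \<epsilon> * (z \<epsilon> - c \<epsilon>) ^ n) < K \<epsilon>) (at_right 0))))"
  using conv_set_terms_bounded[OF assms(1,3)]
    coeff_wmod_terms_bounded_near_center[OF assms(1,2), of c] by blast

end
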